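(* Let $\alpha\in(0,\tfrac12]$, $X_A,X_B>0$, and suppose the solution function $S$ has exactly three zeros $\sigma_1^*<\sigma_2^*<\sigma_3^*$ in $(0,\infty)$. If either $\sqrt{\frac{8\alpha}{1-\alpha}}-\frac{2\alpha}{1-\alpha}\le\frac{X_B}{X_A}\le1$, or $\frac{X_B}{X_A}>1$, then there exists a pre-commitment $p\in[0,X_B]$ by player $B$ to battlefield $b=1$ such that $u_B(p)>\pi_B(\sigma_2^* )$.
   Context: Two-battlefield asymmetric setting: valuations $v_{A,1}=\alpha$, $v_{A,2}=1-\alpha$, $v_{B,1}=1-\alpha$, $v_{B,2}=\alpha$, budgets $X_A,X_B>0$. Define, for $x,y\ge0$, $L(x,y)=\frac{x}{2y}$ if $0\le x\le y$, $y>0$; $L(x,y)=1-\frac{y}{2x}$ if $x>y\ge0$; $L(0,0)=\tfrac12$. Let $c=\frac{(1-\alpha)^2}{\alpha}+\frac{\alpha^2}{1-\alpha}$, $r=X_A/X_B$, and $S:(0,\infty)\to\mathbb R$: $S(\sigma)=\sigma^2(c\sigma-r)$ on $(0,\frac{\alpha}{1-\alpha})$; $S(\sigma)=\frac{\alpha^2}{1-\alpha}(\sigma^3-r)+\alpha\sigma(1-r\sigma)$ on $[\frac{\alpha}{1-\alpha},\frac{1-\alpha}{\alpha})$; $S(\sigma)=\sigma-rc$ on $[\frac{1-\alpha}{\alpha},\infty)$. Player $B$'s equilibrium payoff for a zero $\sigma$: $\pi_B(\sigma)=1-\frac{\sigma}{2}$ if $\sigma\in(0,\frac{\alpha}{1-\alpha})$;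 $\pi_B(\sigma)=1-\alpha-\frac{\alpha\sigma}{2}+\frac{\alpha^2}{2\sigma(1-\alpha)}$ if $\sigma\in[\frac{\alpha}{1-\alpha},\frac{1-\alpha}{\alpha})$; $\pi_B(\sigma)=\frac{c}{2\sigma}$ if $\sigma\ge\frac{1-\alpha}{\alpha}$. Pre-commitment: $B$ places $p\in[0,X_B]$ on one battlefield $b\in\{1,2\}$; $u_A^{M}(p)=v_{A,b}+(1-v_{A,b})L(X_A-p,X_B-p)$ (for $p\le X_A$), $u_A^{W}(p)=(1-v_{A,b})L(X_A,X_B-p)$; $A$'s response is $\mathtt A_b(p)=\mathtt M$ if $p\le X_A$ and $u_A^M(p)>u_A^W(p)$, else $\mathtt A_b(p)=\mathtt W$ (ties go to withdrawing). $B$'s payoff is $u_B(p)=(1-v_{B,b})L(X_B-p,X_A-p)$ if $\mathtt A_b(p)=\mathtt M$ and $u_B(p)=v_{B,b}+(1-v_{B,b})L(X_B-p,X_A)$ if $\mathtt A_b(p)=\mathtt W$. *)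

theory Defs
  imports Complex_Main
begin

definition L :: "real \<Rightarrow> real \<Rightarrow> real" where
  "L x y = (if x = 0 \<and> y = 0 then 1/2
            else if x \<le> y then x / (2 * y)
            else 1 - y / (2 * x))"

definition vA :: "real \<Rightarrow> nat \<Rightarrow> real" where
  "vA \<alpha> b = (if b = 1 then \<alpha> else 1 - \<alpha>)"

definition vB :: "real \<Rightarrow> nat \<Rightarrow> real" where
  "vB \<alpha> b = (if b = 1 then 1 - \<alpha> else \<alpha>)"

definition cc :: "real \<Rightarrow> real" where
  "cc \<alpha> = (1 - \<alpha>)^2 / \<alpha> + \<alpha>^2 / (1 - \<alpha>)"

definition S :: "real \<Rightarrow> real \<Rightarrow> real \<Rightarrow> real \<Rightarrow> real" where
  "S \<alpha> XA XB \<sigma> =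
     (let r = XA / XB; c = cc \<alpha> in
      if \<sigma> < \<alpha> / (1 - \<alpha>) then \<sigma>^2 * (c * \<sigma> - r)
      else if \<sigma> < (1 - \<alpha>) / \<alpha> then
        \<alpha>^2 / (1 - \<alpha>) * (\<sigma>^3 - r) + \<alpha> * \<sigma> * (1 - r * \<sigma>)
      else \<sigma> - r * c)"

text \<open>Player B's equilibrium payoff associated with a zero sigma of S.\<close>
definition piB :: "real \<Rightarrow> real \<Rightarrow> real" where
  "piB \<alpha> \<sigma> =
     (if \<sigma> < \<alpha> / (1 - \<alpha>) then 1 - \<sigma> / 2
      else if \<sigma> < (1 - \<alpha>) / \<alpha> then
        1 - \<alpha> - \<alpha> * \<sigma> / 2 + \<alpha>^2 / (2 * \<sigma> * (1 - \<alpha>))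
      else cc \<alpha> / (2 * \<sigma>))"

text \<open>Pre-commitment of p units by B on battlefield b.\<close>
definition uAM :: "real \<Rightarrow> real \<Rightarrow> real \<Rightarrow> nat \<Rightarrow> real \<Rightarrow> real" where
  "uAM \<alpha> XA XB b p = vA \<alpha> b + (1 - vA \<alpha> b) * L (XA - p) (XB - p)"

definition uAW :: "real \<Rightarrow> real \<Rightarrow> real \<Rightarrow> nat \<Rightarrow> real \<Rightarrow> real" where
  "uAW \<alpha> XA XB b p = (1 - vA \<alpha> b) * L XA (XB - p)"

text \<open>A's response: True = match (M), False = withdraw (W); ties go to withdrawing.\<close>
definition A_matches :: "real \<Rightarrow> real \<Rightarrow> real \<Rightarrow> nat \<Rightarrow> real \<Rightarrow> bool" where
  "A_matches \<alpha> XA XB b p \<longleftrightarrow> p \<le> XA \<and> uAM \<alpha> XA XB b p > uAW \<alpha> XA XB b p"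

definition uB :: "real \<Rightarrow> real \<Rightarrow> real \<Rightarrow> nat \<Rightarrow> real \<Rightarrow> real" where
  "uB \<alpha> XA XB b p =
     (if A_matches \<alpha> XA XB b p then (1 - vB \<alpha> b) * L (XB - p) (XA - p)
      else vB \<alpha> b + (1 - vB \<alpha> b) * L (XB - p) XA)"

end

theory Submission
  imports Defs
begin

text \<open>
  With \<open>a = \<alpha>/(1-\<alpha>)\<close>, the zeros \<open>\<sigma>\<close> of \<open>S\<close> are exactly the solutions of \<open>X\<^sub>A/X\<^sub>B = R(\<sigma>)\<close>
  for a continuous piecewise function \<open>R\<close> which is linear below \<open>a\<close>, linear above \<open>1/a\<close>,
  and equal to \<open>\<sigma>(a\<sigma>\<^sup>2+1)/(\<sigma>\<^sup>2+a)\<close> in between.  \<open>R\<close> is strictly increasing on \<open>(0,\<surd>a]\<close> and on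
  \<open>[1/\<surd>a,\<infinity>)\<close>, and everywhere if \<open>a \<ge> 1/3\<close>.  Three zeros therefore force \<open>a < 1/3\<close> and
  \<open>\<surd>a < \<sigma>\<^sub>2 < 1/\<surd>a\<close>, which puts \<open>\<pi>\<^sub>B(\<sigma>\<^sub>2)\<close> below \<open>1-\<alpha>\<close>.  On the other hand B can always
  commit an amount \<open>p\<close> to battlefield 1 that makes A withdraw from it, which secures B at
  least \<open>v\<^sub>B\<^sub>,\<^sub>1 = 1-\<alpha>\<close>: \<open>p = X\<^sub>B\<close> if \<open>X\<^sub>B > X\<^sub>A\<close>, and otherwise \<open>p = (X\<^sub>B + 2aX\<^sub>A)/2\<close>, for which
  the hypothesis on \<open>X\<^sub>B/X\<^sub>A\<close> is exactly the condition that A weakly prefers withdrawing.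
\<close>

lemma L_nonneg: "0 \<le> x \<Longrightarrow> 0 \<le> y \<Longrightarrow> 0 \<le> L x y"
  unfolding L_def by (auto simp: field_simps)

lemma L_ge_eq: "0 < y \<Longrightarrow> y \<le> x \<Longrightarrow> L x y = 1 - y / (2 * x)"
  unfolding L_def by (cases "x = y") auto

lemma uB_ge_vB_if_withdraw:
  assumes "0 \<le> \<alpha>" "\<alpha> \<le> 1" "0 < XA" "p \<le> XB" "\<not> A_matches \<alpha> XA XB b p"
  shows "vB \<alpha> b \<le> uB \<alpha> XA XB b p"
proof -
  have "0 \<le> 1 - vB \<alpha> b" using assms(1,2) unfolding vB_def by simp
  moreover have "0 \<le> L (XB - p) XA" using assms(3,4) by (simp add: L_nonneg)
  ultimately show ?thesis using assms(5) unfolding uB_def by simp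
qed

subsection \<open>Zeros of the solution function\<close>

definition zero_ratio_mid :: "real \<Rightarrow> real \<Rightarrow> real" where
  "zero_ratio_mid a \<sigma> = \<sigma> * (a * \<sigma>^2 + 1) / (\<sigma>^2 + a)"

text \<open>The value of \<open>X\<^sub>A/X\<^sub>B\<close> for which \<open>\<sigma> > 0\<close> is a zero of \<open>S\<close>, where \<open>a = \<alpha>/(1-\<alpha>)\<close>.\<close>
definition zero_ratio :: "real \<Rightarrow> real \<Rightarrow> real" where
  "zero_ratio a \<sigma> = (if \<sigma> < a then (a^2 - a + 1) / a * \<sigma>
                      else if \<sigma> < 1 / a then zero_ratio_mid a \<sigma>
                      else a * \<sigma> / (a^2 - a + 1))"

lemma quadratic_pos: "0 < (a::real)^2 - a + 1"
proof -
  have "0 \<le> (a - 1/2)^2" by simp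
  then show ?thesis by (simp add: power2_eq_square algebra_simps)
qed

lemma cc_eq:
  assumes "0 < \<alpha>" "\<alpha> < 1"
  defines "a \<equiv> \<alpha> / (1 - \<alpha>)"
  shows "cc \<alpha> = (a^2 - a + 1) / a"
proof -
  define w where "w = 1 - \<alpha>"
  have w: "w \<noteq> 0" "\<alpha> \<noteq> 0" using assms unfolding w_def by auto
  have "w^3 + \<alpha>^3 = (\<alpha> + w) * (\<alpha>^2 - \<alpha> * w + w^2)"
    by (simp add: algebra_simps power2_eq_square power3_eq_cube)
  also have "\<alpha> + w = 1" unfolding w_def by simp
  finally have "cc \<alpha> = (\<alpha>^2 - \<alpha> * w + w^2) / (\<alpha> * w)"
    using w unfolding cc_def w_def[symmetric] by (simp add: field_simps power2_eq_square power3_eq_cube)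
  also have "\<dots> = (a^2 - a + 1) / a"
    using w unfolding a_def w_def[symmetric] by (simp add: field_simps power2_eq_square)
  finally show ?thesis .
qed

lemma S_eq_zero_iff:
  assumes "0 < \<alpha>" "\<alpha> < 1" "0 < \<sigma>"
  shows "S \<alpha> XA XB \<sigma> = 0 \<longleftrightarrow> XA / XB = zero_ratio (\<alpha> / (1 - \<alpha>)) \<sigma>"
proof -
  define a where "a = \<alpha> / (1 - \<alpha>)"
  define r where "r = XA / XB"
  define k where "k = a^2 - a + 1"
  have a0: "0 < a" and k0: "0 < k"
    using assms quadratic_pos unfolding a_def k_def by simp_all
  have c: "cc \<alpha> = k / a" using cc_eq[OF assms(1,2)] unfolding a_def k_def .
  have "\<alpha>^2 / w * (\<sigma>^3 - r) + \<alpha> * \<sigma> * (1 - r * \<sigma>)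
      = \<alpha> * (\<sigma> * (\<alpha> / w * \<sigma>^2 + 1) - r * (\<sigma>^2 + \<alpha> / w))" if "w \<noteq> 0" for w
    using that by (simp add: field_simps power2_eq_square power3_eq_cube)
  then have mid: "\<alpha>^2 / (1 - \<alpha>) * (\<sigma>^3 - r) + \<alpha> * \<sigma> * (1 - r * \<sigma>)
      = \<alpha> * (\<sigma> * (a * \<sigma>^2 + 1) - r * (\<sigma>^2 + a))"
    using assms(2) unfolding a_def by simp
  have "0 < \<sigma>^2 + a" using a0 by (simp add: add_nonneg_pos)
  then have "\<sigma> * (a * \<sigma>^2 + 1) - r * (\<sigma>^2 + a) = 0 \<longleftrightarrow> r = zero_ratio_mid a \<sigma>"
    unfolding zero_ratio_mid_def by (auto simp: field_simps)
  then have mid_iff: "\<alpha> * (\<sigma> * (a * \<sigma>^2 + 1) - r * (\<sigma>^2 + a)) = 0 \<longleftrightarrow> r = zero_ratio_mid a \<sigma>"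
    using assms(1) by simp
  have ia: "(1 - \<alpha>) / \<alpha> = 1 / a" unfolding a_def by simp
  have "S \<alpha> XA XB \<sigma> = (if \<sigma> < a then \<sigma>^2 * (k / a * \<sigma> - r)
      else if \<sigma> < 1/a then \<alpha> * (\<sigma> * (a * \<sigma>^2 + 1) - r * (\<sigma>^2 + a))
      else \<sigma> - r * (k / a))"
    unfolding S_def Let_def r_def[symmetric] ia a_def[symmetric] c mid by simp
  then show ?thesis
    using assms(1,3) a0 k0 mid_iff
    unfolding zero_ratio_def a_def[symmetric] r_def[symmetric] k_def[symmetric]
    by (auto simp: field_simps)
qed

subsection \<open>Monotonicity of the zero ratio\<close>

lemma strict_mono_on_Un:
  fixes f :: "'a::linorder \<Rightarrow> 'b::order"
  assumes "strict_mono_on A f" "strict_mono_on B f" "b \<in> A" "b \<in> B"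
    and "\<forall>x\<in>A. x \<le> b" "\<forall>y\<in>B. b \<le> y"
  shows "strict_mono_on (A \<union> B) f"
proof (rule strict_mono_onI)
  fix s t assume st: "s \<in> A \<union> B" "t \<in> A \<union> B" "s < t"
  show "f s < f t"
  proof (cases "s \<in> A \<and> t \<in> B")
    case True
    then have "s \<le> b" "b \<le> t" using assms(5,6) by auto
    have "f b < f t" if "s = b" using that True st(3) assms(2,4) by (auto dest: strict_mono_onD)
    moreover have "f s < f t" if "s < b"
    proof -
      have "f s < f b" using that True assms(1,3) by (auto dest: strict_mono_onD)
      also have "f b \<le> f t"
        using \<open>b \<le> t\<close> True assms(2,4) by (cases "b = t") (auto dest: strict_mono_onD)
      finally show ?thesis .
    qed
    ultimately show ?thesis using \<open>s \<le> b\<close> by fastforce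
  next
    case False
    with st assms(5,6) have "s \<in> A \<and> t \<in> A \<or> s \<in> B \<and> t \<in> B" by force
    then show ?thesis using st(3) assms(1,2) by (auto dest: strict_mono_onD)
  qed
qed

text \<open>
  The numerator of the difference factors as \<open>(t - s)(aP\<^sup>2 + a\<^sup>2(s\<^sup>2+st+t\<^sup>2) - P + a)\<close> with
  \<open>P = st\<close>, and since \<open>s\<^sup>2+st+t\<^sup>2 > 3P\<close> the second factor exceeds \<open>aP\<^sup>2 + 3a\<^sup>2P - P + a\<close>, which is
  nonnegative when \<open>P \<le> a\<close>, when \<open>P \<ge> 1/a\<close>, or when \<open>a \<ge> 1/3\<close>.
\<close>
lemma zero_ratio_mid_less:
  fixes a s t :: real
  assumes "0 < a" "0 < s" "s < t"
    and "s * t \<le> a \<or> 1 / a \<le> s * t \<or> 1/3 \<le> a"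
  shows "zero_ratio_mid a s < zero_ratio_mid a t"
proof -
  define P where "P = s * t"
  have P0: "0 < P" using assms unfolding P_def by simp
  have "0 < (t - s)^2" using assms(3) by simp
  then have "3 * P < s^2 + s*t + t^2" unfolding P_def by (simp add: power2_eq_square algebra_simps)
  then have "a^2 * (3 * P) < a^2 * (s^2 + s*t + t^2)" using assms(1) by simp
  moreover have "0 \<le> a * P^2 + 3 * a^2 * P - P + a"
  proof -
    consider "P \<le> a" | "1 / a \<le> P" | "1/3 \<le> a" using assms(4) unfolding P_def by blast
    then show ?thesis
    proof cases
      case 1
      have "0 \<le> a * P^2 + 3 * a^2 * P" using P0 assms(1) by simp
      then show ?thesis using 1 by linarith
    next
      case 2
      then have "0 \<le> P * (a * P - 1)" using P0 assms(1) by (simp add: field_simps)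
      then have "P \<le> a * P^2" by (simp add: power2_eq_square algebra_simps)
      moreover have "0 \<le> 3 * a^2 * P" using P0 by simp
      ultimately show ?thesis using assms(1) by linarith
    next
      case 3
      have "a * P^2 + 3 * a^2 * P - P + a = a * (P - 1)^2 + (3*a - 1) * (a + 1) * P"
        by (simp add: algebra_simps power2_eq_square)
      then show ?thesis using 3 P0 assms(1) by simp
    qed
  qed
  ultimately have E: "0 < a * P^2 + a^2 * (s^2 + s*t + t^2) - P + a" by linarith
  have "t * (a * t^2 + 1) * (s^2 + a) - s * (a * s^2 + 1) * (t^2 + a)
      = (t - s) * (a * P^2 + a^2 * (s^2 + s*t + t^2) - P + a)"
    unfolding P_def by (simp add: algebra_simps power2_eq_square)
  also have "\<dots> > 0" using E assms(3) by simp
  finally have "s * (a * s^2 + 1) * (t^2 + a) < t * (a * t^2 + 1) * (s^2 + a)" by simp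
  moreover have "0 < s^2 + a" "0 < t^2 + a" using assms by (auto intro: add_nonneg_pos)
  ultimately show ?thesis unfolding zero_ratio_mid_def by (simp add: divide_simps)
qed

lemma zero_ratio_mid_at_lower_end: "0 < a \<Longrightarrow> zero_ratio_mid a a = a^2 - a + 1"
proof -
  assume a: "0 < a"
  have "a * (a * a^2 + 1) = (a^2 - a + 1) * (a^2 + a)"
    by (simp add: algebra_simps power2_eq_square)
  moreover have "0 < a^2 + a" using a by (simp add: add_pos_pos)
  ultimately show ?thesis unfolding zero_ratio_mid_def by (simp add: divide_simps)
qed

lemma zero_ratio_mid_at_upper_end: "0 < a \<Longrightarrow> zero_ratio_mid a (1 / a) = 1 / (a^2 - a + 1)"
proof -
  assume a: "0 < a"
  have "zero_ratio_mid a (1 / a) = ((1 + a) / a^2) / ((1 + a^3) / a^2)"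
    using a unfolding zero_ratio_mid_def
    by (simp add: field_simps power2_eq_square power3_eq_cube)
  also have "\<dots> = (1 + a) / (1 + a^3)" using a by simp
  also have "1 + a^3 = (1 + a) * (a^2 - a + 1)"
    by (simp add: algebra_simps power2_eq_square power3_eq_cube)
  finally show ?thesis using a by simp
qed

lemma zero_ratio_below:
  assumes "0 < a" "a \<le> 1" "\<sigma> \<le> a"
  shows "zero_ratio a \<sigma> = (a^2 - a + 1) / a * \<sigma>"
proof (cases "\<sigma> < a")
  case False
  then have \<sigma>: "\<sigma> = a" using assms(3) by simp
  have "zero_ratio a a = a^2 - a + 1"
  proof (cases "a < 1 / a")
    case False
    then have "1 \<le> a * a" using assms(1) by (simp add: field_simps)
    moreover have "a * a \<le> a" using assms(1,2) by (simp add: mult_le_cancel_left1)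
    ultimately have "a = 1" using assms(2) by linarith
    then show ?thesis unfolding zero_ratio_def by simp
  qed (simp add: zero_ratio_def zero_ratio_mid_at_lower_end assms(1))
  then show ?thesis using \<sigma> assms(1) by simp
qed (simp add: zero_ratio_def)

lemma zero_ratio_between:
  assumes "0 < a" "a \<le> \<sigma>" "\<sigma> \<le> 1 / a"
  shows "zero_ratio a \<sigma> = zero_ratio_mid a \<sigma>"
proof (cases "\<sigma> < 1 / a")
  case False
  then have "\<sigma> = 1 / a" using assms(3) by simp
  moreover have "a * (1 / a) / (a^2 - a + 1) = 1 / (a^2 - a + 1)" using assms(1) by simp
  ultimately show ?thesis using assms zero_ratio_mid_at_upper_end[of a] unfolding zero_ratio_def
    by simp
qed (use assms in \<open>simp add: zero_ratio_def\<close>)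

lemma zero_ratio_above:
  assumes "0 < a" "a \<le> 1" "1 / a \<le> \<sigma>"
  shows "zero_ratio a \<sigma> = a * \<sigma> / (a^2 - a + 1)"
proof -
  have "a \<le> 1 / a" using assms(1,2) by (simp add: field_simps mult_le_one)
  then show ?thesis using assms unfolding zero_ratio_def by simp
qed

lemma strict_mono_on_zero_ratio_below:
  assumes "0 < a" "a \<le> 1"
  shows "strict_mono_on {0<..a} (zero_ratio a)"
proof (rule strict_mono_onI)
  fix s t assume "s \<in> {0<..a}" "t \<in> {0<..a}" "s < t"
  moreover have "(a^2 - a + 1) * s < (a^2 - a + 1) * t" using \<open>s < t\<close> quadratic_pos[of a] by simp
  ultimately show "zero_ratio a s < zero_ratio a t"
    using assms by (simp add: zero_ratio_below divide_strict_right_mono)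
qed

lemma strict_mono_on_zero_ratio_above:
  assumes "0 < a" "a \<le> 1"
  shows "strict_mono_on {1/a..} (zero_ratio a)"
proof (rule strict_mono_onI)
  fix s t assume "s \<in> {1/a..}" "t \<in> {1/a..}" "s < t"
  then show "zero_ratio a s < zero_ratio a t"
    using assms quadratic_pos[of a] by (simp add: zero_ratio_above divide_strict_right_mono)
qed

lemma strict_mono_on_zero_ratio_between:
  assumes "0 < a" "I \<subseteq> {a..1/a}"
    and "\<And>s t. s \<in> I \<Longrightarrow> t \<in> I \<Longrightarrow> s < t \<Longrightarrow> s * t \<le> a \<or> 1 / a \<le> s * t \<or> 1/3 \<le> a"
  shows "strict_mono_on I (zero_ratio a)"
proof (rule strict_mono_onI)
  fix s t assume st: "s \<in> I" "t \<in> I" "s < t"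
  then have "a \<le> s" "t \<le> 1 / a" using assms(2) by auto
  then show "zero_ratio a s < zero_ratio a t"
    using st assms zero_ratio_mid_less[of a s t] by (simp add: zero_ratio_between)
qed

lemma sqrt_unit_interval_bounds:
  fixes a :: real
  assumes "0 < a" "a \<le> 1"
  shows "a \<le> sqrt a" "sqrt a \<le> 1" "1 \<le> 1 / sqrt a" "1 / sqrt a \<le> 1 / a"
proof -
  show "a \<le> sqrt a" using assms by (intro real_le_rsqrt) (simp add: power2_eq_square mult_le_one)
  show "sqrt a \<le> 1" using assms by simp
  then show "1 \<le> 1 / sqrt a" using assms by simp
  show "1 / sqrt a \<le> 1 / a" using \<open>a \<le> sqrt a\<close> assms by (simp add: frac_le)
qed

lemma strict_mono_on_zero_ratio_lower:
  assumes "0 < a" "a \<le> 1"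
  shows "strict_mono_on {0<..sqrt a} (zero_ratio a)"
proof -
  note sq = sqrt_unit_interval_bounds[OF assms]
  have "1 \<le> 1 / a" using assms by simp
  have "s * t \<le> a" if "s \<in> {a..sqrt a}" "t \<in> {a..sqrt a}" for s t
    using that assms mult_mono[of s "sqrt a" t "sqrt a"] by simp
  moreover have "sqrt a \<le> 1 / a" using sq(2) \<open>1 \<le> 1 / a\<close> by linarith
  then have "{a..sqrt a} \<subseteq> {a..1/a}" by auto
  ultimately have "strict_mono_on {a..sqrt a} (zero_ratio a)"
    using assms(1) by (intro strict_mono_on_zero_ratio_between) auto
  then have "strict_mono_on ({0<..a} \<union> {a..sqrt a}) (zero_ratio a)"
    using assms sq strict_mono_on_zero_ratio_below
    by (intro strict_mono_on_Un[where b = a]) auto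
  moreover have "{0<..a} \<union> {a..sqrt a} = {0<..sqrt a}" using assms sq by auto
  ultimately show ?thesis by simp
qed

lemma strict_mono_on_zero_ratio_upper:
  assumes "0 < a" "a \<le> 1"
  shows "strict_mono_on {1 / sqrt a..} (zero_ratio a)"
proof -
  note sq = sqrt_unit_interval_bounds[OF assms]
  have "a \<le> 1 / sqrt a" using assms(2) sq(3) by linarith
  have "1 / a \<le> s * t" if "1 / sqrt a \<le> s" "1 / sqrt a \<le> t" for s t
  proof -
    have "0 < 1 / sqrt a" using assms(1) by simp
    then have "0 \<le> s" using that(1) by linarith
    then have "1 / sqrt a * (1 / sqrt a) \<le> s * t"
      using that assms(1) by (intro mult_mono) auto
    then show ?thesis using assms(1) by simp
  qed
  moreover have "{1 / sqrt a..1 / a} \<subseteq> {a..1/a}" using \<open>a \<le> 1 / sqrt a\<close> by auto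
  ultimately have "strict_mono_on {1 / sqrt a..1 / a} (zero_ratio a)"
    using assms(1) by (intro strict_mono_on_zero_ratio_between) auto
  then have "strict_mono_on ({1 / sqrt a..1 / a} \<union> {1 / a..}) (zero_ratio a)"
    using assms sq(4) strict_mono_on_zero_ratio_above
    by (intro strict_mono_on_Un[where b = "1 / a"]) auto
  moreover have "{1 / sqrt a..1 / a} \<union> {1 / a..} = {1 / sqrt a..}" using sq(4) by auto
  ultimately show ?thesis by simp
qed

lemma strict_mono_on_zero_ratio:
  assumes "1/3 \<le> a" "a \<le> 1"
  shows "strict_mono_on {0<..} (zero_ratio a)"
proof -
  have a0: "0 < a" using assms(1) by simp
  have a1: "a \<le> 1 / a" using a0 assms(2) by (simp add: field_simps mult_le_one)
  have "strict_mono_on {a..1/a} (zero_ratio a)"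
    using a0 assms(1) by (intro strict_mono_on_zero_ratio_between) auto
  then have "strict_mono_on ({0<..a} \<union> {a..1/a}) (zero_ratio a)"
    using a0 a1 assms(2) strict_mono_on_zero_ratio_below
    by (intro strict_mono_on_Un[where b = a]) auto
  then have "strict_mono_on (({0<..a} \<union> {a..1/a}) \<union> {1/a..}) (zero_ratio a)"
    using a0 a1 assms(2) strict_mono_on_zero_ratio_above
    by (intro strict_mono_on_Un[where A = "{0<..a} \<union> {a..1/a}" and b = "1/a"]) auto
  moreover have "({0<..a} \<union> {a..1/a}) \<union> {1/a..} = {0<..}" using a0 a1 by auto
  ultimately show ?thesis by simp
qed

lemma zero_ratio_three_equal_values:
  assumes "0 < a" "a \<le> 1" "0 < s1" "s1 < s2" "s2 < s3"
    and "zero_ratio a s1 = zero_ratio a s2" "zero_ratio a s2 = zero_ratio a s3"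
  shows "a < 1/3" "sqrt a < s2" "s2 < 1 / sqrt a"
proof -
  have "s1 \<noteq> s2" "s2 \<noteq> s3" using assms(4,5) by simp_all
  show "a < 1/3"
  proof (rule ccontr)
    assume "\<not> a < 1/3"
    then have "inj_on (zero_ratio a) {0<..}"
      using assms(2) by (intro strict_mono_on_imp_inj_on strict_mono_on_zero_ratio) auto
    then show False using assms(3,4,6) \<open>s1 \<noteq> s2\<close> by (auto dest: inj_onD)
  qed
  show "sqrt a < s2"
  proof (rule ccontr)
    assume "\<not> sqrt a < s2"
    then have "s1 \<in> {0<..sqrt a}" "s2 \<in> {0<..sqrt a}" using assms(3,4) by auto
    then show False
      using strict_mono_on_imp_inj_on[OF strict_mono_on_zero_ratio_lower[OF assms(1,2)]]
        assms(6) \<open>s1 \<noteq> s2\<close> by (auto dest: inj_onD)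
  qed
  show "s2 < 1 / sqrt a"
  proof (rule ccontr)
    assume "\<not> s2 < 1 / sqrt a"
    then have "s2 \<in> {1 / sqrt a..}" "s3 \<in> {1 / sqrt a..}" using assms(5) by auto
    then show False
      using strict_mono_on_imp_inj_on[OF strict_mono_on_zero_ratio_upper[OF assms(1,2)]]
        assms(7) \<open>s2 \<noteq> s3\<close> by (auto dest: inj_onD)
  qed
qed

subsection \<open>Payoffs\<close>

lemma piB_less_one_minus_alpha:
  assumes "0 < \<alpha>" "\<alpha> \<le> 1/2" "sqrt (\<alpha> / (1 - \<alpha>)) < \<sigma>" "\<sigma> < (1 - \<alpha>) / \<alpha>"
  shows "piB \<alpha> \<sigma> < 1 - \<alpha>"
proof -
  define a where "a = \<alpha> / (1 - \<alpha>)"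
  have a: "0 < a" "a \<le> 1" using assms(1,2) unfolding a_def by (simp_all add: field_simps)
  have "0 < sqrt a" and \<sigma>: "sqrt a < \<sigma>" using a(1) assms(3) unfolding a_def[symmetric] by simp_all
  then have "0 < \<sigma>" by linarith
  have "sqrt a * sqrt a < \<sigma> * \<sigma>"
    using mult_strict_mono[OF \<sigma> \<sigma> \<open>0 < \<sigma>\<close> less_imp_le[OF \<open>0 < sqrt a\<close>]] .
  then have "a < \<sigma> * \<sigma>" using a(1) by simp
  have "a \<le> \<sigma>"
    using sqrt_unit_interval_bounds(1)[OF a] assms(3) unfolding a_def[symmetric] by linarith
  then have "piB \<alpha> \<sigma> = 1 - \<alpha> - \<alpha> * \<sigma> / 2 + \<alpha> * (a / \<sigma>) / 2"
    using assms(2,4) unfolding piB_def a_def by (simp add: power2_eq_square)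
  moreover have "a / \<sigma> < \<sigma>" using \<open>a < \<sigma> * \<sigma>\<close> \<open>0 < \<sigma>\<close> by (simp add: divide_less_eq)
  then have "\<alpha> * (a / \<sigma>) < \<alpha> * \<sigma>" using assms(1) by (rule mult_strict_left_mono)
  ultimately show ?thesis by (simp add: field_simps)
qed

lemma withdrawal_commitment:
  fixes \<alpha> XA XB :: real
  assumes "0 < \<alpha>" "\<alpha> < 1/3" "0 < XA" "XB \<le> XA"
    and "sqrt (8 * \<alpha> / (1 - \<alpha>)) - 2 * \<alpha> / (1 - \<alpha>) \<le> XB / XA"
  defines "p \<equiv> (XB + 2 * (\<alpha> / (1 - \<alpha>)) * XA) / 2"
  shows "0 \<le> p" "p \<le> XB" "\<not> A_matches \<alpha> XA XB 1 p"
proof -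
  define a where "a = \<alpha> / (1 - \<alpha>)"
  define q where "q = XB - p"
  define D where "D = XA - p"
  have a: "0 < a" "a < 1/2" "(1 - \<alpha>) * a = \<alpha>"
    using assms(1,2) unfolding a_def by (simp_all add: field_simps)
  have "(4 * a)^2 < 8 * a" using a by (simp add: power2_eq_square)
  then have "4 * a < sqrt (8 * a)" by (rule real_less_rsqrt)
  moreover have hyp: "sqrt (8 * a) * XA \<le> XB + 2 * a * XA"
    using assms(3,5) unfolding a_def by (simp add: field_simps)
  ultimately have "2 * a * XA < XB"
    using assms(3) mult_strict_right_mono[of "4 * a" "sqrt (8 * a)" XA] by linarith
  moreover have "0 < 2 * a * XA" "2 * a * XA < XA" using a(1,2) assms(3) by simp_all
  ultimately have q: "0 < q" "q \<le> D" "q < XA" "0 \<le> p"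
    using assms(4) unfolding q_def D_def p_def a_def[symmetric] by (simp_all add: field_simps)
  then show "0 \<le> p" "p \<le> XB" unfolding q_def by simp_all
  have "(sqrt (8 * a) * XA)^2 \<le> (XB + 2 * a * XA)^2"
    using hyp a(1) assms(3) by (intro power_mono) auto
  then have "8 * a * XA^2 \<le> (XB + 2 * a * XA)^2" using a(1) by (simp add: power_mult_distrib)
  moreover have "4 * (q * p - 2 * a * D * XA) = (XB + 2 * a * XA)^2 - 8 * a * XA^2"
    unfolding q_def D_def p_def a_def[symmetric] by (simp add: field_simps power2_eq_square)
  ultimately have "a * (2 * D * XA) \<le> q * p" by simp
  then have "a \<le> q * p / (2 * D * XA)" using q assms(3) by (simp add: pos_le_divide_eq)
  also have "q * p / (2 * D * XA) = q / (2 * D) - q / (2 * XA)"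
    using q assms(3) unfolding D_def by (simp add: field_simps)
  finally have "\<alpha> \<le> (1 - \<alpha>) * (q / (2 * D) - q / (2 * XA))"
    using mult_left_mono[of a _ "1 - \<alpha>"] a(3) assms(2) by simp
  moreover have "L (XA - p) (XB - p) = 1 - q / (2 * D)" "L XA (XB - p) = 1 - q / (2 * XA)"
    using q unfolding q_def D_def by (simp_all add: L_ge_eq)
  then have "uAM \<alpha> XA XB 1 p = \<alpha> + (1 - \<alpha>) * (1 - q / (2 * D))"
    "uAW \<alpha> XA XB 1 p = (1 - \<alpha>) * (1 - q / (2 * XA))"
    unfolding uAM_def uAW_def vA_def by simp_all
  ultimately have "uAM \<alpha> XA XB 1 p \<le> uAW \<alpha> XA XB 1 p" by (simp add: algebra_simps)
  then show "\<not> A_matches \<alpha> XA XB 1 p" unfolding A_matches_def by simp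
qed

lemma withdrawal_commitment_exists:
  fixes \<alpha> XA XB :: real
  assumes "0 < \<alpha>" "\<alpha> < 1/3" "0 < XA" "0 < XB"
    and "(sqrt (8 * \<alpha> / (1 - \<alpha>)) - 2 * \<alpha> / (1 - \<alpha>) \<le> XB / XA \<and> XB / XA \<le> 1)
         \<or> XB / XA > 1"
  shows "\<exists>p\<in>{0..XB}. \<not> A_matches \<alpha> XA XB 1 p"
proof (cases "XA < XB")
  case True
  then show ?thesis unfolding A_matches_def using assms(4) by (intro bexI[of _ XB]) auto
next
  case False
  then have "sqrt (8 * \<alpha> / (1 - \<alpha>)) - 2 * \<alpha> / (1 - \<alpha>) \<le> XB / XA"
    using assms(3,5) by (auto simp: field_simps)
  from withdrawal_commitment[OF assms(1-3) _ this] False show ?thesis by force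
qed

theorem theorem2:
  fixes \<alpha> XA XB \<sigma>1 \<sigma>2 \<sigma>3 :: real
  assumes "0 < \<alpha>" and "\<alpha> \<le> 1/2"
    and "0 < XA" and "0 < XB"
    and "\<sigma>1 < \<sigma>2" and "\<sigma>2 < \<sigma>3"
    and "{\<sigma>. 0 < \<sigma> \<and> S \<alpha> XA XB \<sigma> = 0} = {\<sigma>1, \<sigma>2, \<sigma>3}"
    and "(sqrt (8 * \<alpha> / (1 - \<alpha>)) - 2 * \<alpha> / (1 - \<alpha>) \<le> XB / XA \<and> XB / XA \<le> 1)
         \<or> XB / XA > 1"
  shows "\<exists>p\<in>{0..XB}. uB \<alpha> XA XB 1 p > piB \<alpha> \<sigma>2"
proof -
  define a where "a = \<alpha> / (1 - \<alpha>)"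
  have a: "0 < a" "a \<le> 1" using assms(1,2) unfolding a_def by (simp_all add: field_simps)
  have zero: "0 < \<sigma> \<and> XA / XB = zero_ratio a \<sigma>" if "\<sigma> \<in> {\<sigma>1, \<sigma>2, \<sigma>3}" for \<sigma>
    using that assms(1,2,7) S_eq_zero_iff[of \<alpha> \<sigma> XA XB] unfolding a_def by auto
  have "a < 1/3" "sqrt a < \<sigma>2" "\<sigma>2 < 1 / sqrt a"
    using zero_ratio_three_equal_values[OF a, of \<sigma>1 \<sigma>2 \<sigma>3]
      zero[of \<sigma>1] zero[of \<sigma>2] zero[of \<sigma>3] assms(5,6) by auto
  have "\<sigma>2 < (1 - \<alpha>) / \<alpha>"
    using \<open>\<sigma>2 < 1 / sqrt a\<close> sqrt_unit_interval_bounds(4)[OF a] unfolding a_def by simp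
  then have "piB \<alpha> \<sigma>2 < 1 - \<alpha>"
    using piB_less_one_minus_alpha assms(1,2) \<open>sqrt a < \<sigma>2\<close> unfolding a_def by blast
  moreover have "\<alpha> < 1/3" using \<open>a < 1/3\<close> assms(2) unfolding a_def by (simp add: field_simps)
  then obtain p where p: "p \<in> {0..XB}" "\<not> A_matches \<alpha> XA XB 1 p"
    using withdrawal_commitment_exists assms(1,3,4,8) by blast
  moreover have "vB \<alpha> 1 \<le> uB \<alpha> XA XB 1 p"
    using uB_ge_vB_if_withdraw[OF _ _ assms(3) _ p(2)] assms(1,2) p(1) by simp
  ultimately show ?thesis unfolding vB_def by force
qed

end
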